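(* Consider the following algorithm (first-visit Monte Carlo policy evaluation with $H$-step lookahead). Fix integers $m\ge1$, $H\ge1$, an initial vector $V_0\in\mathbb{R}^{|\mathcal S|}$, and deterministic stepsizes $\gamma_k\in(0,1]$. At iteration $k\ge0$: let $\mu_{k+1}$ be a policy with $T_{\mu_{k+1}}T^{H-1}V_k=T^HV_k$; generate one trajectory of the Markov chain under $\mu_{k+1}$ whose initial state is drawn from a distribution $p$ on $\mathcal S$; let $\mathcal D_k$ be the set of states visited by the trajectory; for each $i\in\mathcal D_k$ obtain, from the portion of the trajectory starting at the first visit to $i$, an estimate $T^m_{\mu_{k+1}}T^{H-1}V_k(i)+w_k(i)$; and set $$V_{k+1}(i)=\begin{cases}(1-\gamma_k)V_k(i)+\gamma_k\big(T^m_{\mu_{k+1}}T^{H-1}V_k(i)+w_k(i)\big), & i\in\mathcal D_k,\\ V_k(i), & i\notin\mathcal D_k.\end{cases}$$ Assume: (a) $p(i)>0$ for all $i\in\mathcal S$; (b) $\alpha^{H-1}+2(1+\alpha^m)\frac{\alpha^{H-1}}{1-\alpha}<1$; (c) $\sum_k\gamma_k=\infty$ and $\sum_k\gamma_k^2<\infty$; and the noise satisfies $E[w_k(i)\mid\mathcal F_k, i\in\mathcal D_k]=0$ and $|w_k(i)|\le C$ almost surely for a constant $C$, where $\mathcal F_k$ is the history up to the start of iteration $k$. Then $V_k\to J^*$ almost surely.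
   Context: Finite Markov decision process with finite state space $\mathcal S$, finite action set $\mathcal A$, transition probabilities $P_{ij}(u)$, costs $g(i,u)\in[0,1]$, discount $\alpha\in(0,1)$. For a policy $\mu:\mathcal S\to\mathcal A$, $T_\mu J=g_\mu+\alpha P_\mu J$ with $g_\mu(i)=g(i,\mu(i))$, $(P_\mu)_{ij}=P_{ij}(\mu(i))$; $T^m_\mu$ is the $m$-fold composition (an $m$-step rollout). $(TJ)(i)=\min_u\big[g(i,u)+\alpha\sum_jP_{ij}(u)J(j)\big]$ with fixed point $J^*$ (the optimal value function). The quantity $T^m_{\mu_{k+1}}T^{H-1}V_k(i)+w_k(i)$ is a sampled return whose conditional mean is $T^m_{\mu_{k+1}}T^{H-1}V_k(i)$. *)

theory Defs
  imports "HOL-Probability.Probability"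
begin

definition mdp :: "('s::finite \<Rightarrow> 'a::finite \<Rightarrow> 's \<Rightarrow> real) \<Rightarrow> ('s \<Rightarrow> 'a \<Rightarrow> real) \<Rightarrow> real \<Rightarrow> bool" where
  "mdp P g \<alpha> \<longleftrightarrow> (\<forall>i u j. 0 \<le> P i u j) \<and> (\<forall>i u. (\<Sum>j\<in>UNIV. P i u j) = 1)
     \<and> (\<forall>i u. 0 \<le> g i u \<and> g i u \<le> 1) \<and> 0 < \<alpha> \<and> \<alpha> < 1"

definition Tmu :: "('s::finite \<Rightarrow> 'a \<Rightarrow> 's \<Rightarrow> real) \<Rightarrow> ('s \<Rightarrow> 'a \<Rightarrow> real) \<Rightarrow> real
    \<Rightarrow> ('s \<Rightarrow> 'a) \<Rightarrow> ('s \<Rightarrow> real) \<Rightarrow> ('s \<Rightarrow> real)" where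
  "Tmu P g \<alpha> \<mu> J = (\<lambda>i. g i (\<mu> i) + \<alpha> * (\<Sum>j\<in>UNIV. P i (\<mu> i) j * J j))"

definition Tbell :: "('s::finite \<Rightarrow> 'a::finite \<Rightarrow> 's \<Rightarrow> real) \<Rightarrow> ('s \<Rightarrow> 'a \<Rightarrow> real) \<Rightarrow> real
    \<Rightarrow> ('s \<Rightarrow> real) \<Rightarrow> ('s \<Rightarrow> real)" where
  "Tbell P g \<alpha> J = (\<lambda>i. Min ((\<lambda>u. g i u + \<alpha> * (\<Sum>j\<in>UNIV. P i u j * J j)) ` UNIV))"

definition Jstar :: "('s::finite \<Rightarrow> 'a::finite \<Rightarrow> 's \<Rightarrow> real) \<Rightarrow> ('s \<Rightarrow> 'a \<Rightarrow> real) \<Rightarrow> real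
    \<Rightarrow> ('s \<Rightarrow> real)" where
  "Jstar P g \<alpha> = (THE J. Tbell P g \<alpha> J = J)"

end

theory Submission
  imports Defs
begin

text \<open>Along each sample path the iteration is an asynchronous relaxation
  \<open>e\<^sub>k\<^sub>+\<^sub>1 = (1 - a\<^sub>k) e\<^sub>k + a\<^sub>k (G\<^sub>k + w\<^sub>k)\<close> of the error \<open>e\<^sub>k = V\<^sub>k - J\<^sup>*\<close>, with step
  \<open>a\<^sub>k(i) = \<gamma>\<^sub>k [i \<in> D\<^sub>k]\<close>. The lookahead-plus-rollout target is a sup-norm contraction around
  \<open>J\<^sup>*\<close>: \<open>|G\<^sub>k| \<le> \<beta> \<parallel>e\<^sub>k\<parallel>\<^sub>\<infinity>\<close> with \<open>\<beta> = 2\<alpha>\<^sup>H/(1 - \<alpha>) < 1\<close> by condition (b). Two martingale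
  arguments (an \<open>L\<^sup>2\<close>-bounded martingale converges, via Kolmogorov's maximal inequality) show that
  almost surely \<open>\<Sum> a\<^sub>k w\<^sub>k\<close> converges and, since every state is the initial state with
  conditional probability \<open>p(i) > 0\<close>, that \<open>\<Sum> a\<^sub>k(i) = \<infinity>\<close> for every state. A deterministic
  relaxation lemma then shrinks \<open>\<parallel>e\<^sub>k\<parallel>\<^sub>\<infinity>\<close> eventually by the factor \<open>(1 + \<beta>)/2\<close> again and
  again, so \<open>e\<^sub>k \<longrightarrow> 0\<close>.\<close>

section \<open>Sup-norm contractions and the Bellman operators\<close>

lemma abs_Min_range_diff_le:
  fixes f h :: "'a::finite \<Rightarrow> real"
  assumes "\<And>u. \<bar>f u - h u\<bar> \<le> d"
  shows "\<bar>Min (range f) - Min (range h)\<bar> \<le> d"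
proof -
  have "Min (range f) \<in> range f" "Min (range h) \<in> range h" by (simp_all add: Min_in)
  then obtain uf uh where uf: "Min (range f) = f uf" and uh: "Min (range h) = h uh" by blast
  have "Min (range f) \<le> f uh" "Min (range h) \<le> h uf" by simp_all
  then show ?thesis using assms[of uf] assms[of uh] uf uh by (auto simp: abs_le_iff)
qed

lemma funpow_sup_contraction:
  fixes T :: "('s \<Rightarrow> real) \<Rightarrow> 's \<Rightarrow> real"
  assumes contr: "\<And>X Y d i. (\<And>j. \<bar>X j - Y j\<bar> \<le> d) \<Longrightarrow> \<bar>T X i - T Y i\<bar> \<le> c * d"
    and d: "\<And>j. \<bar>X j - Y j\<bar> \<le> d"
  shows "\<bar>(T ^^ n) X i - (T ^^ n) Y i\<bar> \<le> c ^ n * d"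
proof (induction n arbitrary: i)
  case 0
  then show ?case using d by simp
next
  case (Suc n)
  show ?case using contr[OF Suc.IH, where i=i] by (simp add: mult.assoc)
qed

lemma sup_contraction_fixed_point_unique:
  fixes T :: "('s::finite \<Rightarrow> real) \<Rightarrow> 's \<Rightarrow> real"
  assumes contr: "\<And>X Y d i. (\<And>j. \<bar>X j - Y j\<bar> \<le> d) \<Longrightarrow> \<bar>T X i - T Y i\<bar> \<le> c * d"
    and "c < 1" and X: "T X = X" and Y: "T Y = Y"
  shows "X = Y"
proof -
  define d where "d = Max (range (\<lambda>j. \<bar>X j - Y j\<bar>))"
  have dj: "\<bar>X j - Y j\<bar> \<le> d" for j unfolding d_def by simp
  have "d \<in> range (\<lambda>j. \<bar>X j - Y j\<bar>)" unfolding d_def by (simp add: Max_in)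
  then obtain j0 where j0: "d = \<bar>X j0 - Y j0\<bar>" by blast
  have "d \<le> c * d" using contr[where X=X and Y=Y and d=d and i=j0, OF dj] X Y j0 by simp
  then have "(1 - c) * d \<le> 0" by (simp add: left_diff_distrib)
  then have "d \<le> 0" using \<open>c < 1\<close> by (simp add: mult_le_0_iff)
  then show ?thesis using dj by (intro ext) (meson abs_le_zero_iff order_trans right_minus_eq)
qed

lemma sup_contraction_has_fixed_point:
  fixes T :: "('s::finite \<Rightarrow> real) \<Rightarrow> 's \<Rightarrow> real"
  assumes contr: "\<And>X Y d i. (\<And>j. \<bar>X j - Y j\<bar> \<le> d) \<Longrightarrow> \<bar>T X i - T Y i\<bar> \<le> c * d"
    and c: "0 \<le> c" "c < 1"
  shows "\<exists>J. T J = J"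
proof -
  define x where "x n = (T ^^ n) (\<lambda>_. 0)" for n
  define K where "K = Max (range (\<lambda>j. \<bar>x 1 j - x 0 j\<bar>))"
  have K: "\<bar>x 1 j - x 0 j\<bar> \<le> K" for j unfolding K_def by simp
  have x_Suc: "x (Suc n) = (T ^^ n) (x 1)" for n unfolding x_def by (simp add: funpow_swap1)
  have increment: "\<bar>x (Suc n) j - x n j\<bar> \<le> c ^ n * K" for n j
    unfolding x_Suc using funpow_sup_contraction[where T=T and X="x 1" and Y="x 0", OF contr K]
    by (simp add: x_def)
  have convergent: "convergent (\<lambda>n. x n j)" for j
  proof -
    have "summable (\<lambda>n. c ^ n * K)" using c by (simp add: summable_mult2)
    then have "summable (\<lambda>n. x (Suc n) j - x n j)"
      by (rule summable_comparison_test'[where N=0]) (simp add: increment)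
    then have "convergent (\<lambda>n. x 0 j + (\<Sum>k<n. x (Suc k) j - x k j))"
      by (intro convergent_add convergent_const) (simp add: summable_iff_convergent)
    then show ?thesis using sum_lessThan_telescope[of "\<lambda>k. x k j"] by simp
  qed
  define J where "J j = lim (\<lambda>n. x n j)" for j
  have J: "(\<lambda>n. x n j) \<longlonglongrightarrow> J j" for j
    using convergent unfolding J_def by (simp add: convergent_LIMSEQ_iff)
  have near: "\<bar>T J i - J i\<bar> \<le> 2 * e" if e: "e > 0" for i e
  proof -
    have "\<forall>\<^sub>F n in sequentially. \<forall>j. \<bar>x n j - J j\<bar> < e"
    proof (rule eventually_all_finite)
      fix j show "\<forall>\<^sub>F n in sequentially. \<bar>x n j - J j\<bar> < e"
        using J[of j] e unfolding tendsto_iff dist_real_def by blast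
    qed
    then obtain N where N: "\<And>n j. n \<ge> N \<Longrightarrow> \<bar>x n j - J j\<bar> < e"
      unfolding eventually_sequentially by blast
    have "\<bar>J j - x N j\<bar> \<le> e" for j using N[of N j] by (simp add: abs_minus_commute)
    then have "\<bar>T J i - T (x N) i\<bar> \<le> c * e" by (rule contr)
    then have "\<bar>T J i - x (Suc N) i\<bar> \<le> c * e" by (simp add: x_def)
    moreover have "\<bar>x (Suc N) i - J i\<bar> \<le> e" using N[of "Suc N" i] by simp
    moreover have "c * e \<le> e" using c e by (simp add: mult_left_le_one_le)
    ultimately show ?thesis by linarith
  qed
  have "\<bar>T J i - J i\<bar> \<le> 0" for i
  proof (rule field_le_epsilon)
    fix e :: real assume "0 < e"
    then show "\<bar>T J i - J i\<bar> \<le> 0 + e" using near[of "e / 2" i] by simp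
  qed
  then have "T J = J" by (simp add: fun_eq_iff)
  then show ?thesis by blast
qed

lemma abs_lookahead_diff_le:
  fixes X Y :: "'s::finite \<Rightarrow> real"
  assumes mdp: "mdp P g \<alpha>" and d: "\<And>j. \<bar>X j - Y j\<bar> \<le> d"
  shows "\<bar>(g i u + \<alpha> * (\<Sum>j\<in>UNIV. P i u j * X j)) - (g i u + \<alpha> * (\<Sum>j\<in>UNIV. P i u j * Y j))\<bar>
           \<le> \<alpha> * d"
proof -
  have \<alpha>: "0 < \<alpha>" and P0: "\<And>j. 0 \<le> P i u j" and P1: "(\<Sum>j\<in>UNIV. P i u j) = 1"
    using mdp by (auto simp: mdp_def)
  have "\<bar>(\<Sum>j\<in>UNIV. P i u j * X j) - (\<Sum>j\<in>UNIV. P i u j * Y j)\<bar>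
          = \<bar>\<Sum>j\<in>UNIV. P i u j * (X j - Y j)\<bar>"
    by (simp add: sum_subtractf right_diff_distrib)
  also have "\<dots> \<le> (\<Sum>j\<in>UNIV. P i u j * d)"
    by (rule order_trans[OF sum_abs sum_mono]) (simp add: abs_mult P0 d mult_left_mono)
  also have "\<dots> = d" by (simp add: sum_distrib_right[symmetric] P1)
  finally show ?thesis
    using \<alpha> by (simp add: right_diff_distrib[symmetric] abs_mult mult_left_mono)
qed

lemma Tbell_contraction:
  assumes "mdp P g \<alpha>" and "\<And>j. \<bar>X j - Y j\<bar> \<le> d"
  shows "\<bar>Tbell P g \<alpha> X i - Tbell P g \<alpha> Y i\<bar> \<le> \<alpha> * d"
  unfolding Tbell_def by (rule abs_Min_range_diff_le) (rule abs_lookahead_diff_le[OF assms])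

lemma Tmu_contraction:
  assumes "mdp P g \<alpha>" and "\<And>j. \<bar>X j - Y j\<bar> \<le> d"
  shows "\<bar>Tmu P g \<alpha> \<mu> X i - Tmu P g \<alpha> \<mu> Y i\<bar> \<le> \<alpha> * d"
  unfolding Tmu_def using abs_lookahead_diff_le[OF assms, of i "\<mu> i"] by simp

lemma Tbell_Jstar:
  assumes mdp: "mdp P g \<alpha>"
  shows "Tbell P g \<alpha> (Jstar P g \<alpha>) = Jstar P g \<alpha>"
proof -
  have \<alpha>: "0 \<le> \<alpha>" "\<alpha> < 1" using mdp by (auto simp: mdp_def)
  have contr: "\<And>X Y d i. (\<And>j. \<bar>X j - Y j\<bar> \<le> d) \<Longrightarrow>
      \<bar>Tbell P g \<alpha> X i - Tbell P g \<alpha> Y i\<bar> \<le> \<alpha> * d"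
    by (rule Tbell_contraction[OF mdp])
  obtain J where J: "Tbell P g \<alpha> J = J"
    using sup_contraction_has_fixed_point[where T="Tbell P g \<alpha>", OF contr \<alpha>] by blast
  have unique: "X = Y" if "Tbell P g \<alpha> X = X" "Tbell P g \<alpha> Y = Y" for X Y
    by (rule sup_contraction_fixed_point_unique[where T="Tbell P g \<alpha>", OF contr \<alpha>(2) that])
  show ?thesis unfolding Jstar_def by (rule theI[of _ J]) (use J unique in blast)+
qed

lemma lookahead_factor_lt_1:
  fixes \<alpha> :: real
  assumes \<alpha>: "0 < \<alpha>" "\<alpha> < 1" and H: "H \<ge> 1"
    and cond: "\<alpha> ^ (H - 1) + 2 * (1 + \<alpha> ^ m) * (\<alpha> ^ (H - 1) / (1 - \<alpha>)) < 1"
  shows "2 * \<alpha> ^ H / (1 - \<alpha>) < 1"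
proof -
  define t where "t = \<alpha> ^ (H - 1) / (1 - \<alpha>)"
  have "2 * \<alpha> ^ H / (1 - \<alpha>) = \<alpha> * (2 * t)"
    using H unfolding t_def by (cases H) simp_all
  also have "\<dots> \<le> (1 + \<alpha> ^ m) * (2 * t)"
    using \<alpha> unfolding t_def by (intro mult_right_mono) (simp_all add: add_increasing2)
  also have "\<dots> = 2 * (1 + \<alpha> ^ m) * t" by simp
  also have "\<dots> < 1" using cond \<alpha> unfolding t_def by (smt (verit) zero_less_power)
  finally show ?thesis .
qed

text \<open>With \<open>X = T\<^sup>H\<^sup>-\<^sup>1 V\<close> within \<open>\<delta> = \<alpha>\<^sup>H\<^sup>-\<^sup>1 d\<close> of \<open>J\<^sup>*\<close> and \<open>\<mu>\<close> greedy for \<open>X\<close>,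
  \<open>T\<^sub>\<mu> J\<^sup>*\<close> lies within \<open>2\<alpha>\<delta>\<close> of \<open>J\<^sup>*\<close>; hence all rollouts \<open>T\<^sub>\<mu>\<^sup>m X\<close> stay within the fixed point
  \<open>2\<alpha>\<delta> / (1 - \<alpha>)\<close> of \<open>b \<mapsto> \<alpha> b + 2\<alpha>\<delta>\<close>.\<close>

lemma rollout_lookahead_error_le:
  fixes P :: "'s::finite \<Rightarrow> 'a::finite \<Rightarrow> 's \<Rightarrow> real"
  assumes mdp: "mdp P g \<alpha>" and m: "m \<ge> 1" and H: "H \<ge> 1"
    and greedy: "Tmu P g \<alpha> \<mu> ((Tbell P g \<alpha> ^^ (H - 1)) V) = (Tbell P g \<alpha> ^^ H) V"
    and d: "\<And>j. \<bar>V j - Jstar P g \<alpha> j\<bar> \<le> d"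
  shows "\<bar>(Tmu P g \<alpha> \<mu> ^^ m) ((Tbell P g \<alpha> ^^ (H - 1)) V) i - Jstar P g \<alpha> i\<bar>
           \<le> 2 * \<alpha> ^ H / (1 - \<alpha>) * d"
proof -
  have \<alpha>: "0 < \<alpha>" "\<alpha> < 1" using mdp by (auto simp: mdp_def)
  define J where "J = Jstar P g \<alpha>"
  define X where "X = (Tbell P g \<alpha> ^^ (H - 1)) V"
  define \<delta> where "\<delta> = \<alpha> ^ (H - 1) * d"
  define b where "b = 2 * \<alpha> * \<delta> / (1 - \<alpha>)"
  have TJ: "Tbell P g \<alpha> J = J" unfolding J_def by (rule Tbell_Jstar[OF mdp])
  then have "(Tbell P g \<alpha> ^^ n) J = J" for n by (induction n) simp_all
  then have X_J: "\<bar>X j - J j\<bar> \<le> \<delta>" for j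
    using funpow_sup_contraction[where T="Tbell P g \<alpha>" and X=V and Y=J and n="H - 1",
        OF Tbell_contraction[OF mdp]] d
    unfolding X_def \<delta>_def J_def by simp
  have "Tmu P g \<alpha> \<mu> X = Tbell P g \<alpha> X"
    using greedy H unfolding X_def by (cases H) simp_all
  then have TmuX_J: "\<bar>Tmu P g \<alpha> \<mu> X j - J j\<bar> \<le> \<alpha> * \<delta>" for j
    using Tbell_contraction[where X=X and Y=J and i=j, OF mdp X_J] TJ by simp
  have TmuJ_TmuX: "\<bar>Tmu P g \<alpha> \<mu> J j - Tmu P g \<alpha> \<mu> X j\<bar> \<le> \<alpha> * \<delta>" for j
    using X_J by (intro Tmu_contraction[OF mdp]) (simp add: abs_minus_commute)
  have TmuJ_J: "\<bar>Tmu P g \<alpha> \<mu> J j - J j\<bar> \<le> 2 * \<alpha> * \<delta>" for j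
    using TmuJ_TmuX[of j] TmuX_J[of j] by linarith
  have "0 \<le> \<delta>" using X_J[of undefined] by linarith
  then have "\<alpha> * \<delta> \<le> b" unfolding b_def using \<alpha> by (simp add: field_simps)
  have rollout: "\<bar>(Tmu P g \<alpha> \<mu> ^^ Suc k) X j - J j\<bar> \<le> b" for k j
  proof (induction k arbitrary: j)
    case 0
    then show ?case using TmuX_J[of j] \<open>\<alpha> * \<delta> \<le> b\<close> by simp
  next
    case (Suc k)
    have "\<bar>Tmu P g \<alpha> \<mu> ((Tmu P g \<alpha> \<mu> ^^ Suc k) X) j - Tmu P g \<alpha> \<mu> J j\<bar> \<le> \<alpha> * b"
      by (rule Tmu_contraction[OF mdp Suc.IH])
    moreover have "\<alpha> * b + 2 * \<alpha> * \<delta> = b" unfolding b_def using \<alpha> by (simp add: field_simps)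
    ultimately show ?case using TmuJ_J[of j] by simp
  qed
  have "b = 2 * \<alpha> ^ H / (1 - \<alpha>) * d"
    using H unfolding b_def \<delta>_def by (cases H) (simp_all add: field_simps)
  then show ?thesis using rollout[of "m - 1" i] m unfolding X_def J_def by simp
qed

section \<open>Relaxation recursions\<close>

lemma not_summable_nonneg_sum_eventually_ge:
  fixes a :: "nat \<Rightarrow> real"
  assumes a: "\<And>n. 0 \<le> a n" and not_summable: "\<not> summable a"
  shows "\<exists>N. \<forall>n\<ge>N. K \<le> (\<Sum>k<n. a k)"
proof (rule ccontr)
  assume "\<not> ?thesis"
  then have below: "\<forall>N. \<exists>n\<ge>N. (\<Sum>k<n. a k) < K" by (auto simp: not_le)
  have "(\<Sum>k<n. a k) \<le> K" for n
  proof -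
    obtain n' where "n' \<ge> n" "(\<Sum>k<n'. a k) < K" using below by blast
    moreover have "(\<Sum>k<n. a k) \<le> (\<Sum>k<n'. a k)"
      using \<open>n' \<ge> n\<close> a by (intro sum_mono2) auto
    ultimately show ?thesis by simp
  qed
  then have "summable a" by (rule summableI_nonneg_bounded[OF a])
  with not_summable show False by simp
qed

text \<open>Along \<open>c\<^sub>n\<^sub>+\<^sub>1 - b \<le> (1 - a\<^sub>n) (c\<^sub>n - b)\<close> the excess over \<open>b\<close> decays like
  \<open>exp (- \<Sum> a\<^sub>k)\<close>, which tends to \<open>0\<close> because the steps are not summable.\<close>

lemma relaxation_eventually_le:
  fixes c a :: "nat \<Rightarrow> real"
  assumes a: "\<And>n. 0 \<le> a n \<and> a n \<le> 1" and not_summable: "\<not> summable a"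
    and rec: "\<And>n. n \<ge> n\<^sub>0 \<Longrightarrow> c (Suc n) \<le> (1 - a n) * c n + a n * b"
    and e: "e > 0"
  shows "\<forall>\<^sub>F n in sequentially. c n \<le> b + e"
proof -
  define d where "d n = max (c n - b) 0" for n
  define A where "A n = (\<Sum>k<n. a k)" for n
  have d_Suc: "d (Suc n) \<le> (1 - a n) * d n" if "n \<ge> n\<^sub>0" for n
  proof -
    have "c (Suc n) - b \<le> (1 - a n) * (c n - b)" using rec[OF that] by (simp add: algebra_simps)
    also have "\<dots> \<le> (1 - a n) * d n" using a[of n] unfolding d_def by (intro mult_left_mono) auto
    finally show ?thesis unfolding d_def using a[of n] by simp
  qed
  have d_exp: "d (n\<^sub>0 + k) \<le> d n\<^sub>0 * exp (A n\<^sub>0 - A (n\<^sub>0 + k))" for k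
  proof (induction k)
    case 0
    then show ?case by simp
  next
    case (Suc k)
    have "d (n\<^sub>0 + Suc k) \<le> (1 - a (n\<^sub>0 + k)) * d (n\<^sub>0 + k)" using d_Suc[of "n\<^sub>0 + k"] by simp
    also have "\<dots> \<le> exp (- a (n\<^sub>0 + k)) * d (n\<^sub>0 + k)"
      using exp_ge_add_one_self[of "- a (n\<^sub>0 + k)"] unfolding d_def by (intro mult_right_mono) auto
    also have "\<dots> \<le> exp (- a (n\<^sub>0 + k)) * (d n\<^sub>0 * exp (A n\<^sub>0 - A (n\<^sub>0 + k)))"
      using Suc.IH by (intro mult_left_mono) auto
    also have "\<dots> = d n\<^sub>0 * exp (A n\<^sub>0 - A (n\<^sub>0 + Suc k))"
      unfolding A_def by (simp add: mult_ac flip: exp_add)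
    finally show ?case .
  qed
  have d0: "0 \<le> d n\<^sub>0" unfolding d_def by simp
  obtain N where N: "\<And>n. n \<ge> N \<Longrightarrow> A n\<^sub>0 + ln ((d n\<^sub>0 + 1) / e) \<le> A n"
    using not_summable_nonneg_sum_eventually_ge[OF _ not_summable] a unfolding A_def by blast
  have "c n \<le> b + e" if n: "n \<ge> max N n\<^sub>0" for n
  proof -
    obtain k where k: "n = n\<^sub>0 + k" using n by (metis le_add_diff_inverse max.bounded_iff)
    have "exp (A n\<^sub>0 - A n) \<le> exp (- ln ((d n\<^sub>0 + 1) / e))" using N[of n] n by simp
    also have "\<dots> = e / (d n\<^sub>0 + 1)" using e d0 by (simp add: exp_minus)
    finally have "d n \<le> d n\<^sub>0 * (e / (d n\<^sub>0 + 1))"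
      using d_exp[of k] k d0 by (smt (verit) mult_left_mono)
    also have "\<dots> \<le> e" using d0 e by (simp add: field_simps)
    finally show ?thesis unfolding d_def by simp
  qed
  then show ?thesis unfolding eventually_sequentially by blast
qed

text \<open>Subtracting the tail \<open>r\<^sub>n\<close> of the convergent series \<open>\<Sum> x\<^sub>k\<close> turns the recursion into
  \<open>v\<^sub>n\<^sub>+\<^sub>1 = (1 - a\<^sub>n) v\<^sub>n - a\<^sub>n r\<^sub>n\<close> with \<open>r\<^sub>n \<longrightarrow> 0\<close>.\<close>

lemma relaxation_tendsto_0:
  fixes u x a :: "nat \<Rightarrow> real"
  assumes a: "\<And>n. 0 \<le> a n \<and> a n \<le> 1" and not_summable: "\<not> summable a"
    and rec: "\<And>n. u (Suc n) = (1 - a n) * u n + x n"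
    and x: "convergent (\<lambda>n. \<Sum>k<n. x k)"
  shows "u \<longlonglongrightarrow> 0"
proof -
  obtain s where "(\<lambda>n. \<Sum>k<n. x k) \<longlonglongrightarrow> s" using x by (auto simp: convergent_def)
  define r where "r n = (\<Sum>k<n. x k) - s" for n
  have r: "r \<longlonglongrightarrow> 0" unfolding r_def using \<open>_ \<longlonglongrightarrow> s\<close> by (simp add: LIM_zero)
  define v where "v n = u n - r n" for n
  have v_Suc: "v (Suc n) = (1 - a n) * v n - a n * r n" for n
    unfolding v_def r_def using rec[of n] by (simp add: algebra_simps)
  show ?thesis unfolding tendsto_iff dist_real_def
  proof (intro allI impI)
    fix e :: real assume e: "e > 0"
    have "\<forall>\<^sub>F n in sequentially. \<bar>r n\<bar> < e / 4"
      using r e unfolding tendsto_iff dist_real_def by (auto dest: spec[of _ "e/4"])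
    then obtain n\<^sub>0 where n\<^sub>0: "\<And>n. n \<ge> n\<^sub>0 \<Longrightarrow> \<bar>r n\<bar> < e / 4"
      by (auto simp: eventually_sequentially)
    have "\<forall>\<^sub>F n in sequentially. \<bar>v n\<bar> \<le> e / 4 + e / 4"
    proof (rule relaxation_eventually_le[OF a not_summable])
      fix n assume "n \<ge> n\<^sub>0"
      have "\<bar>v (Suc n)\<bar> \<le> \<bar>(1 - a n) * v n\<bar> + \<bar>a n * r n\<bar>"
        unfolding v_Suc by (rule abs_triangle_ineq4)
      also have "\<dots> = (1 - a n) * \<bar>v n\<bar> + a n * \<bar>r n\<bar>" using a[of n] by (simp add: abs_mult)
      also have "\<dots> \<le> (1 - a n) * \<bar>v n\<bar> + a n * (e / 4)"
        using a[of n] n\<^sub>0[OF \<open>n \<ge> n\<^sub>0\<close>] by (intro add_left_mono mult_left_mono) auto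
      finally show "\<bar>v (Suc n)\<bar> \<le> (1 - a n) * \<bar>v n\<bar> + a n * (e / 4)" .
    qed (use e in simp)
    moreover have "\<forall>\<^sub>F n in sequentially. \<bar>r n\<bar> < e / 4"
      using n\<^sub>0 eventually_sequentially by blast
    ultimately show "\<forall>\<^sub>F n in sequentially. \<bar>u n - 0\<bar> < e"
    proof eventually_elim
      case (elim n)
      then show ?case unfolding v_def using e by arith
    qed
  qed
qed

locale contractive_relaxation =
  fixes e :: "nat \<Rightarrow> 's::finite \<Rightarrow> real" and a G w :: "nat \<Rightarrow> 's \<Rightarrow> real" and \<beta> C :: real
  assumes \<beta>: "0 \<le> \<beta>" "\<beta> < 1"
    and step_bounds: "\<And>k i. 0 \<le> a k i \<and> a k i \<le> 1"
    and step_not_summable: "\<And>i. \<not> summable (\<lambda>k. a k i)"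
    and noise_convergent: "\<And>i. convergent (\<lambda>n. \<Sum>k<n. a k i * w k i)"
    and noise_bounded: "\<And>k i. \<bar>a k i * w k i\<bar> \<le> a k i * C"
    and recursion: "\<And>k i. e (Suc k) i = (1 - a k i) * e k i + a k i * (G k i + w k i)"
    and contraction: "\<And>k d i. (\<And>j. \<bar>e k j\<bar> \<le> d) \<Longrightarrow> \<bar>G k i\<bar> \<le> \<beta> * d"
begin

lemma e_bounded: "\<exists>B\<ge>0. \<forall>k j. \<bar>e k j\<bar> \<le> B"
proof -
  define B where "B = max (Max (range (\<lambda>j. \<bar>e 0 j\<bar>))) (C / (1 - \<beta>))"
  have "C / (1 - \<beta>) \<le> B" unfolding B_def by simp
  then have BC: "C \<le> (1 - \<beta>) * B" using \<beta> by (simp add: field_simps)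
  have "\<bar>e k j\<bar> \<le> B" for k j
  proof (induction k arbitrary: j)
    case 0
    then show ?case unfolding B_def by (simp add: le_max_iff_disj)
  next
    case (Suc k)
    have G: "\<bar>G k j\<bar> \<le> \<beta> * B" by (rule contraction) (rule Suc.IH)
    have "e (Suc k) j = (1 - a k j) * e k j + a k j * G k j + a k j * w k j"
      unfolding recursion by (simp add: algebra_simps)
    also have "\<bar>\<dots>\<bar> \<le> \<bar>(1 - a k j) * e k j\<bar> + \<bar>a k j * G k j\<bar> + \<bar>a k j * w k j\<bar>"
      by (meson abs_triangle_ineq add_mono order_trans order_refl)
    also have "\<dots> = (1 - a k j) * \<bar>e k j\<bar> + a k j * \<bar>G k j\<bar> + \<bar>a k j * w k j\<bar>"
      using step_bounds[of k j] by (simp add: abs_mult)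
    also have "\<dots> \<le> (1 - a k j) * B + a k j * (\<beta> * B) + a k j * ((1 - \<beta>) * B)"
      using step_bounds[of k j] Suc.IH[of j] G noise_bounded[of k j] BC
      by (intro add_mono mult_left_mono) (auto intro: order_trans mult_left_mono)
    also have "\<dots> = B" by (simp add: algebra_simps)
    finally show ?case .
  qed
  moreover have "0 \<le> B" using calculation[of 0 undefined] by linarith
  ultimately show ?thesis by blast
qed

text \<open>Once \<open>|e\<^sub>k| \<le> D\<close> eventually, each coordinate is a relaxation towards a target of size
  \<open>\<le> \<beta> D\<close> plus vanishing accumulated noise, so eventually \<open>|e\<^sub>k| \<le> (1 + \<beta>) D / 2\<close>.\<close>

lemma e_eventually_contracts:
  assumes D: "D > 0" and bound: "\<forall>\<^sub>F k in sequentially. \<forall>j. \<bar>e k j\<bar> \<le> D"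
  shows "\<forall>\<^sub>F k in sequentially. \<forall>j. \<bar>e k j\<bar> \<le> (1 + \<beta>) / 2 * D"
proof (rule eventually_all_finite)
  fix i
  obtain k\<^sub>0 where k\<^sub>0: "\<And>k j. k \<ge> k\<^sub>0 \<Longrightarrow> \<bar>e k j\<bar> \<le> D"
    using bound by (auto simp: eventually_sequentially)
  define \<epsilon> where "\<epsilon> = (1 - \<beta>) * D / 4"
  have \<epsilon>: "\<epsilon> > 0" unfolding \<epsilon>_def using \<beta> D by simp
  define a' where "a' n = a (n + k\<^sub>0) i" for n
  define u where "u = rec_nat 0 (\<lambda>n u. (1 - a' n) * u + a' n * w (n + k\<^sub>0) i)"
  have u_Suc: "u (Suc n) = (1 - a' n) * u n + a' n * w (n + k\<^sub>0) i" for n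
    unfolding u_def by simp
  define z where "z n = e (n + k\<^sub>0) i - u n" for n
  have z_Suc: "z (Suc n) = (1 - a' n) * z n + a' n * G (n + k\<^sub>0) i" for n
    unfolding z_def u_Suc a'_def using recursion[of "n + k\<^sub>0" i] by (simp add: algebra_simps)
  have a': "0 \<le> a' n \<and> a' n \<le> 1" for n unfolding a'_def by (rule step_bounds)
  have a'_not_summable: "\<not> summable a'"
    using step_not_summable[of i] summable_iff_shift[of "\<lambda>k. a k i" k\<^sub>0] unfolding a'_def by simp
  have "\<forall>\<^sub>F n in sequentially. \<bar>z n\<bar> \<le> \<beta> * D + \<epsilon>"
  proof (rule relaxation_eventually_le[where n\<^sub>0=0, OF a' a'_not_summable _ \<epsilon>])
    fix n
    have "\<bar>G (n + k\<^sub>0) i\<bar> \<le> \<beta> * D" by (rule contraction) (rule k\<^sub>0, simp)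
    then have "a' n * \<bar>G (n + k\<^sub>0) i\<bar> \<le> a' n * (\<beta> * D)" using a'[of n] by (intro mult_left_mono) auto
    moreover have "\<bar>z (Suc n)\<bar> \<le> (1 - a' n) * \<bar>z n\<bar> + a' n * \<bar>G (n + k\<^sub>0) i\<bar>"
      unfolding z_Suc using a'[of n] abs_triangle_ineq[of "(1 - a' n) * z n" "a' n * G (n + k\<^sub>0) i"]
      by (simp only: abs_mult abs_of_nonneg diff_ge_0_iff_ge)
    ultimately show "\<bar>z (Suc n)\<bar> \<le> (1 - a' n) * \<bar>z n\<bar> + a' n * (\<beta> * D)" by linarith
  qed
  moreover have "u \<longlonglongrightarrow> 0"
  proof (rule relaxation_tendsto_0[OF a' a'_not_summable u_Suc])
    have "summable (\<lambda>k. a k i * w k i)" using noise_convergent[of i] by (simp add: summable_iff_convergent)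
    then show "convergent (\<lambda>n. \<Sum>k<n. a' k * w (k + k\<^sub>0) i)"
      using summable_iff_shift[of "\<lambda>k. a k i * w k i" k\<^sub>0] unfolding a'_def
      by (simp add: summable_iff_convergent)
  qed
  then have "\<forall>\<^sub>F n in sequentially. \<bar>u n\<bar> < \<epsilon>" using \<epsilon> by (simp add: tendsto_iff dist_real_def)
  ultimately have "\<forall>\<^sub>F n in sequentially. \<bar>e (n + k\<^sub>0) i\<bar> \<le> (1 + \<beta>) / 2 * D"
  proof eventually_elim
    case (elim n)
    have "\<beta> * D + 2 * \<epsilon> = (1 + \<beta>) / 2 * D" unfolding \<epsilon>_def by (simp add: field_simps)
    then show ?case using elim unfolding z_def by arith
  qed
  then show "\<forall>\<^sub>F k in sequentially. \<bar>e k i\<bar> \<le> (1 + \<beta>) / 2 * D"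
    by (subst eventually_sequentially_seg[symmetric, of _ k\<^sub>0])
qed

lemma e_tendsto_0: "(\<lambda>k. e k i) \<longlonglongrightarrow> 0"
proof -
  obtain B where B: "B \<ge> 0" "\<And>k j. \<bar>e k j\<bar> \<le> B" using e_bounded by blast
  define \<rho> where "\<rho> = (1 + \<beta>) / 2"
  have \<rho>: "0 < \<rho>" "\<rho> < 1" unfolding \<rho>_def using \<beta> by auto
  have level: "\<forall>\<^sub>F k in sequentially. \<forall>j. \<bar>e k j\<bar> \<le> \<rho> ^ n * (B + 1)" for n
  proof (induction n)
    case 0
    then show ?case using B by (simp add: add_increasing2)
  next
    case (Suc n)
    then show ?case
      using e_eventually_contracts[of "\<rho> ^ n * (B + 1)"] \<rho> B unfolding \<rho>_def by (simp add: mult_ac)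
  qed
  show ?thesis unfolding tendsto_iff dist_real_def
  proof (intro allI impI)
    fix \<epsilon> :: real assume "\<epsilon> > 0"
    have "(\<lambda>n. \<rho> ^ n * (B + 1)) \<longlonglongrightarrow> 0 * (B + 1)" using \<rho> by (intro tendsto_intros) simp
    then have "\<forall>\<^sub>F n in sequentially. \<rho> ^ n * (B + 1) < \<epsilon>"
      using \<open>\<epsilon> > 0\<close> by (simp add: order_tendstoD(2))
    then obtain n where small: "\<rho> ^ n * (B + 1) < \<epsilon>" by (auto simp: eventually_sequentially)
    show "\<forall>\<^sub>F k in sequentially. \<bar>e k i - 0\<bar> < \<epsilon>"
      using level[of n] by eventually_elim (use small in \<open>auto intro: le_less_trans\<close>)
  qed
qed

end

lemma lookahead_iteration_tendsto_Jstar: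
  fixes P :: "'s::finite \<Rightarrow> 'a::finite \<Rightarrow> 's \<Rightarrow> real"
    and V :: "nat \<Rightarrow> 's \<Rightarrow> real" and \<mu> :: "nat \<Rightarrow> 's \<Rightarrow> 'a"
    and D :: "nat \<Rightarrow> 's set" and w :: "nat \<Rightarrow> 's \<Rightarrow> real"
  assumes mdp: "mdp P g \<alpha>" and m: "m \<ge> 1" and H: "H \<ge> 1"
    and factor: "2 * \<alpha> ^ H / (1 - \<alpha>) < 1"
    and step: "\<And>k. 0 \<le> \<gamma> k \<and> \<gamma> k \<le> 1"
    and greedy: "\<And>k. Tmu P g \<alpha> (\<mu> k) ((Tbell P g \<alpha> ^^ (H - 1)) (V k)) = (Tbell P g \<alpha> ^^ H) (V k)"
    and update: "\<And>k i. V (Suc k) i =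
         (if i \<in> D k
          then (1 - \<gamma> k) * V k i
               + \<gamma> k * ((Tmu P g \<alpha> (\<mu> k) ^^ m) ((Tbell P g \<alpha> ^^ (H - 1)) (V k)) i + w k i)
          else V k i)"
    and visits: "\<And>i. \<not> summable (\<lambda>k. \<gamma> k * indicator (D k) i)"
    and noise: "\<And>i. convergent (\<lambda>n. \<Sum>k<n. \<gamma> k * indicator (D k) i * w k i)"
    and noise_bounded: "\<And>k i. i \<in> D k \<Longrightarrow> \<bar>w k i\<bar> \<le> C"
  shows "(\<lambda>k. V k i) \<longlonglongrightarrow> Jstar P g \<alpha> i"
proof -
  have \<alpha>: "0 < \<alpha>" "\<alpha> < 1" using mdp by (auto simp: mdp_def)
  interpret contractive_relaxation
    "\<lambda>k i. V k i - Jstar P g \<alpha> i" "\<lambda>k i. \<gamma> k * indicator (D k) i"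
    "\<lambda>k i. (Tmu P g \<alpha> (\<mu> k) ^^ m) ((Tbell P g \<alpha> ^^ (H - 1)) (V k)) i - Jstar P g \<alpha> i"
    w "2 * \<alpha> ^ H / (1 - \<alpha>)" C
  proof
    show "0 \<le> 2 * \<alpha> ^ H / (1 - \<alpha>)" using \<alpha> by simp
    show "0 \<le> \<gamma> k * indicator (D k) i \<and> \<gamma> k * indicator (D k) i \<le> 1" for k i
      using step[of k] by (simp add: indicator_def)
    show "\<bar>\<gamma> k * indicator (D k) i * w k i\<bar> \<le> \<gamma> k * indicator (D k) i * C" for k i
      using step[of k] noise_bounded[of i k] by (simp add: indicator_def abs_mult mult_left_mono)
    show "V (Suc k) i - Jstar P g \<alpha> i = (1 - \<gamma> k * indicator (D k) i) * (V k i - Jstar P g \<alpha> i)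
        + \<gamma> k * indicator (D k) i * ((Tmu P g \<alpha> (\<mu> k) ^^ m) ((Tbell P g \<alpha> ^^ (H - 1)) (V k)) i
          - Jstar P g \<alpha> i + w k i)" for k i
      using update[of k i] by (simp add: indicator_def algebra_simps)
    show "\<bar>(Tmu P g \<alpha> (\<mu> k) ^^ m) ((Tbell P g \<alpha> ^^ (H - 1)) (V k)) i - Jstar P g \<alpha> i\<bar>
        \<le> 2 * \<alpha> ^ H / (1 - \<alpha>) * d" if "\<And>j. \<bar>V k j - Jstar P g \<alpha> j\<bar> \<le> d" for k d i
      by (rule rollout_lookahead_error_le[OF mdp m H greedy that])
  qed (use factor visits noise in auto)
  show ?thesis using e_tendsto_0[of i] by (rule LIM_zero_cancel)
qed

section \<open>Convergence of martingales with square-summable increments\<close>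

locale martingale_difference_seq = prob_space M for M :: "'w measure" +
  fixes F :: "nat \<Rightarrow> 'w measure" and x :: "nat \<Rightarrow> 'w \<Rightarrow> real" and c :: "nat \<Rightarrow> real"
  assumes subalgebra: "\<And>k. subalgebra M (F k)"
    and filtration: "\<And>k. subalgebra (F (Suc k)) (F k)"
    and adapted: "\<And>k. x k \<in> borel_measurable (F (Suc k))"
    and bounded: "\<And>k. AE \<omega> in M. \<bar>x k \<omega>\<bar> \<le> c k"
    and cond_exp_zero: "\<And>k. AE \<omega> in M. real_cond_exp M (F k) (x k) \<omega> = 0"
begin

definition S :: "nat \<Rightarrow> 'w \<Rightarrow> real" where "S n \<omega> = (\<Sum>k<n. x k \<omega>)"

lemma subalgebra_mono: "j \<le> l \<Longrightarrow> subalgebra (F l) (F j)"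
proof (induction l rule: dec_induct)
  case base
  then show ?case by (simp add: subalgebra_def)
next
  case (step l)
  then show ?case using filtration[of l] by (auto simp: subalgebra_def)
qed

lemma measurable_F_mono: "f \<in> borel_measurable (F j) \<Longrightarrow> j \<le> l \<Longrightarrow> f \<in> borel_measurable (F l)"
  using measurable_from_subalg[OF subalgebra_mono] by blast

lemma measurable_F_M: "f \<in> borel_measurable (F j) \<Longrightarrow> f \<in> borel_measurable M"
  using measurable_from_subalg[OF subalgebra] by blast

lemma space_F: "space (F j) = space M"
  using subalgebra[of j] by (simp add: subalgebra_def)

lemma x_measurable [measurable]: "x k \<in> borel_measurable M"
  using measurable_F_M[OF adapted] .

lemma S_measurable_F: "i \<le> j \<Longrightarrow> S i \<in> borel_measurable (F j)"
  unfolding S_def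
  by (intro borel_measurable_sum measurable_F_mono[OF adapted]) auto

lemma S_measurable [measurable]: "S n \<in> borel_measurable M"
  using measurable_F_M[OF S_measurable_F[OF order_refl]] .

lemma bound_nonneg: "0 \<le> c k"
proof -
  have "AE \<omega> in M. 0 \<le> c k" using bounded[of k] by eventually_elim linarith
  then show ?thesis by simp
qed

lemma S_diff_bounded:
  "AE \<omega> in M. \<forall>N n. \<bar>S N \<omega> - S n \<omega>\<bar> \<le> (\<Sum>k<N. c k) + (\<Sum>k<n. c k)"
proof -
  have "AE \<omega> in M. \<forall>k. \<bar>x k \<omega>\<bar> \<le> c k" using bounded by (simp add: AE_all_countable)
  then show ?thesis
  proof eventually_elim
    case (elim \<omega>)
    have "\<bar>S n \<omega>\<bar> \<le> (\<Sum>k<n. c k)" for n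
      unfolding S_def using elim by (intro order_trans[OF sum_abs sum_mono]) auto
    then show ?case by (metis abs_triangle_ineq4 add_mono order_trans)
  qed
qed

lemma S_diff_eq_sum: "j \<le> N \<Longrightarrow> S N \<omega> - S j \<omega> = (\<Sum>l\<in>{j..<N}. x l \<omega>)"
  unfolding S_def by (metis atLeast0LessThan le0 sum.atLeastLessThan_concat add_diff_cancel_left')

lemma integral_mult_increment_eq_0:
  assumes Y: "Y \<in> borel_measurable (F l)" and Y_bounded: "AE \<omega> in M. \<bar>Y \<omega>\<bar> \<le> K"
  shows "(\<integral>\<omega>. Y \<omega> * x l \<omega> \<partial>M) = 0"
proof -
  interpret F: sigma_finite_subalgebra M "F l"
    by (rule finite_measure_subalgebra_is_sigma_finite)
       (simp add: finite_measure_subalgebra_def finite_measure_subalgebra_axioms_def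
         finite_measure_axioms subalgebra)
  have [measurable]: "Y \<in> borel_measurable M" using measurable_F_M[OF Y] .
  have "integrable M (\<lambda>\<omega>. Y \<omega> * x l \<omega>)"
  proof (rule integrable_const_bound[where B="K * c l"])
    show "AE \<omega> in M. norm (Y \<omega> * x l \<omega>) \<le> K * c l"
      using Y_bounded bounded[of l] by eventually_elim (simp add: abs_mult mult_mono)
  qed measurable
  then have "(\<integral>\<omega>. Y \<omega> * x l \<omega> \<partial>M) = (\<integral>\<omega>. Y \<omega> * real_cond_exp M (F l) (x l) \<omega> \<partial>M)"
    by (intro F.real_cond_exp_intg(2)[symmetric]) (use Y in auto)
  also have "\<dots> = (\<integral>\<omega>. 0 \<partial>M)"
  proof (rule integral_cong_AE)
    show "AE \<omega> in M. Y \<omega> * real_cond_exp M (F l) (x l) \<omega> = 0"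
      using cond_exp_zero[of l] by eventually_elim simp
  qed measurable
  finally show ?thesis by simp
qed

lemma integrable_S_diff_square: "integrable M (\<lambda>\<omega>. (S N \<omega> - S n \<omega>)\<^sup>2)"
proof (rule integrable_const_bound[where B="((\<Sum>k<N. c k) + (\<Sum>k<n. c k))\<^sup>2"])
  show "AE \<omega> in M. norm ((S N \<omega> - S n \<omega>)\<^sup>2) \<le> ((\<Sum>k<N. c k) + (\<Sum>k<n. c k))\<^sup>2"
    using S_diff_bounded
  proof eventually_elim
    case (elim \<omega>)
    then have "\<bar>S N \<omega> - S n \<omega>\<bar> \<le> \<bar>(\<Sum>k<N. c k) + (\<Sum>k<n. c k)\<bar>" by (meson abs_ge_self order_trans)
    then show ?case by (simp add: abs_le_square_iff)
  qed
qed measurable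

lemma integral_S_diff_square_le:
  assumes "n \<le> N"
  shows "(\<integral>\<omega>. (S N \<omega> - S n \<omega>)\<^sup>2 \<partial>M) \<le> (\<Sum>k\<in>{n..<N}. (c k)\<^sup>2)"
  using assms
proof (induction N rule: dec_induct)
  case base
  then show ?case by simp
next
  case (step N)
  let ?K = "(\<Sum>k<N. c k) + (\<Sum>k<n. c k)"
  have diff_bounded: "AE \<omega> in M. \<bar>S N \<omega> - S n \<omega>\<bar> \<le> ?K"
    using S_diff_bounded by eventually_elim simp
  note int_square = integrable_S_diff_square[of N n]
  have int_cross: "integrable M (\<lambda>\<omega>. (S N \<omega> - S n \<omega>) * x N \<omega>)"
  proof (rule integrable_const_bound[where B="?K * c N"])
    show "AE \<omega> in M. norm ((S N \<omega> - S n \<omega>) * x N \<omega>) \<le> ?K * c N"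
      using diff_bounded bounded[of N] by eventually_elim (simp add: abs_mult mult_mono)
  qed measurable
  have x_square: "AE \<omega> in M. (x N \<omega>)\<^sup>2 \<le> (c N)\<^sup>2"
    using bounded[of N] by eventually_elim (use bound_nonneg[of N] in \<open>simp add: abs_le_square_iff[symmetric]\<close>)
  have int_x_square: "integrable M (\<lambda>\<omega>. (x N \<omega>)\<^sup>2)"
    by (rule integrable_const_bound[where B="(c N)\<^sup>2"]) (use x_square in auto)
  have "(\<integral>\<omega>. (S N \<omega> - S n \<omega>) * x N \<omega> \<partial>M) = 0"
  proof (rule integral_mult_increment_eq_0[OF _ diff_bounded])
    show "(\<lambda>\<omega>. S N \<omega> - S n \<omega>) \<in> borel_measurable (F N)"
      using S_measurable_F[of N N] S_measurable_F[of n N] step.hyps by measurable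
  qed
  moreover have "(\<integral>\<omega>. (x N \<omega>)\<^sup>2 \<partial>M) \<le> (c N)\<^sup>2"
    using integral_mono_AE[OF int_x_square _ x_square] by (simp add: prob_space)
  moreover have "(S (Suc N) \<omega> - S n \<omega>)\<^sup>2
      = (S N \<omega> - S n \<omega>)\<^sup>2 + 2 * ((S N \<omega> - S n \<omega>) * x N \<omega>) + (x N \<omega>)\<^sup>2" for \<omega>
    by (simp add: S_def power2_eq_square algebra_simps)
  ultimately have "(\<integral>\<omega>. (S (Suc N) \<omega> - S n \<omega>)\<^sup>2 \<partial>M)
      \<le> (\<integral>\<omega>. (S N \<omega> - S n \<omega>)\<^sup>2 \<partial>M) + (c N)\<^sup>2"
    using int_square int_cross int_x_square by simp
  also have "\<dots> \<le> (\<Sum>k\<in>{n..<Suc N}. (c k)\<^sup>2)" using step.IH step.hyps by simp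
  finally show ?case .
qed

definition first_exit :: "real \<Rightarrow> nat \<Rightarrow> nat \<Rightarrow> 'w set" where
  "first_exit \<epsilon> n j =
     {\<omega>\<in>space M. \<epsilon> < \<bar>S j \<omega> - S n \<omega>\<bar> \<and> (\<forall>i\<in>{n..<j}. \<bar>S i \<omega> - S n \<omega>\<bar> \<le> \<epsilon>)}"

lemma first_exit_sets_F: "n \<le> j \<Longrightarrow> first_exit \<epsilon> n j \<in> sets (F j)"
proof -
  assume "n \<le> j"
  have [measurable]: "i \<le> j \<Longrightarrow> S i \<in> borel_measurable (F j)" for i by (rule S_measurable_F)
  have "{\<omega>\<in>space (F j). \<epsilon> < \<bar>S j \<omega> - S n \<omega>\<bar> \<and> (\<forall>i\<in>{n..<j}. \<bar>S i \<omega> - S n \<omega>\<bar> \<le> \<epsilon>)} \<in> sets (F j)"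
    using \<open>n \<le> j\<close> by measurable
  then show ?thesis unfolding first_exit_def space_F .
qed

lemma first_exit_sets [measurable]: "n \<le> j \<Longrightarrow> first_exit \<epsilon> n j \<in> sets M"
  using first_exit_sets_F[of n j \<epsilon>] subalgebra[of j] by (auto simp: subalgebra_def)

lemma first_exit_disjoint: "disjoint_family_on (first_exit \<epsilon> n) {n..}"
  unfolding disjoint_family_on_def first_exit_def
  by (auto simp: linorder_neq_iff) (metis atLeastLessThan_iff not_less)+

lemma exceed_subset_first_exit:
  "{\<omega>\<in>space M. \<exists>j\<in>{n..N}. \<epsilon> < \<bar>S j \<omega> - S n \<omega>\<bar>} \<subseteq> (\<Union>j\<in>{n..N}. first_exit \<epsilon> n j)"
proof
  fix \<omega> assume "\<omega> \<in> {\<omega>\<in>space M. \<exists>j\<in>{n..N}. \<epsilon> < \<bar>S j \<omega> - S n \<omega>\<bar>}"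
  then obtain j where "j \<in> {n..N}" "\<epsilon> < \<bar>S j \<omega> - S n \<omega>\<bar>" "\<omega> \<in> space M" by auto
  define j\<^sub>0 where "j\<^sub>0 = (LEAST j. j \<in> {n..N} \<and> \<epsilon> < \<bar>S j \<omega> - S n \<omega>\<bar>)"
  have j\<^sub>0: "j\<^sub>0 \<in> {n..N} \<and> \<epsilon> < \<bar>S j\<^sub>0 \<omega> - S n \<omega>\<bar>"
    unfolding j\<^sub>0_def by (rule LeastI[of _ j]) (use \<open>j \<in> _\<close> \<open>\<epsilon> < _\<close> in auto)
  have "\<bar>S i \<omega> - S n \<omega>\<bar> \<le> \<epsilon>" if "i \<in> {n..<j\<^sub>0}" for i
    using that j\<^sub>0 not_less_Least[of i "\<lambda>j. j \<in> {n..N} \<and> \<epsilon> < \<bar>S j \<omega> - S n \<omega>\<bar>"]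
    unfolding j\<^sub>0_def by fastforce
  then have "\<omega> \<in> first_exit \<epsilon> n j\<^sub>0" unfolding first_exit_def using \<open>\<omega> \<in> space M\<close> j\<^sub>0 by auto
  then show "\<omega> \<in> (\<Union>j\<in>{n..N}. first_exit \<epsilon> n j)" using j\<^sub>0 by auto
qed

text \<open>On \<open>first_exit \<epsilon> n j\<close> the increment \<open>S N - S j\<close> is orthogonal to the
  \<open>F j\<close>-measurable \<open>S j - S n\<close>, so the square of \<open>S N - S n\<close> dominates that of \<open>S j - S n\<close>
  there, which exceeds \<open>\<epsilon>\<^sup>2\<close>.\<close>

lemma first_exit_measure_le:
  assumes j: "j \<in> {n..N}" and "\<epsilon> > 0"
  shows "\<epsilon>\<^sup>2 * measure M (first_exit \<epsilon> n j)
           \<le> (\<integral>\<omega>. (S N \<omega> - S n \<omega>)\<^sup>2 * indicator (first_exit \<epsilon> n j) \<omega> \<partial>M)"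
proof -
  define A where "A = first_exit \<epsilon> n j"
  define Y where "Y \<omega> = (S j \<omega> - S n \<omega>) * indicator A \<omega>" for \<omega>
  let ?K = "\<lambda>j. (\<Sum>k<j. c k) + (\<Sum>k<n. c k)"
  have [measurable]: "A \<in> sets M" unfolding A_def using j by (intro first_exit_sets) simp
  have Y_F: "Y \<in> borel_measurable (F j)"
  proof -
    have [measurable]: "S j \<in> borel_measurable (F j)" "S n \<in> borel_measurable (F j)" "A \<in> sets (F j)"
      using S_measurable_F[of j j] S_measurable_F[of n j] first_exit_sets_F[of n j] j
      unfolding A_def by auto
    show ?thesis unfolding Y_def by measurable
  qed
  have [measurable]: "Y \<in> borel_measurable M" using measurable_F_M[OF Y_F] .
  have Y_bounded: "AE \<omega> in M. \<bar>Y \<omega>\<bar> \<le> ?K j"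
    using S_diff_bounded
  proof eventually_elim
    case (elim \<omega>)
    moreover have "0 \<le> ?K j" using bound_nonneg by (simp add: sum_nonneg)
    ultimately show ?case by (simp add: Y_def abs_mult indicator_def)
  qed
  have int_Yx: "integrable M (\<lambda>\<omega>. Y \<omega> * x l \<omega>)" for l
  proof (rule integrable_const_bound[where B="?K j * c l"])
    show "AE \<omega> in M. norm (Y \<omega> * x l \<omega>) \<le> ?K j * c l"
      using Y_bounded bounded[of l] by eventually_elim (simp add: abs_mult mult_mono)
  qed measurable
  have "(\<integral>\<omega>. Y \<omega> * (S N \<omega> - S j \<omega>) \<partial>M) = (\<integral>\<omega>. (\<Sum>l\<in>{j..<N}. Y \<omega> * x l \<omega>) \<partial>M)"
    using j by (simp add: S_diff_eq_sum sum_distrib_left)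
  also have "\<dots> = (\<Sum>l\<in>{j..<N}. (\<integral>\<omega>. Y \<omega> * x l \<omega> \<partial>M))"
    using int_Yx by (rule Bochner_Integration.integral_sum)
  also have "\<dots> = 0"
    using integral_mult_increment_eq_0[OF measurable_F_mono[OF Y_F] Y_bounded] by simp
  finally have orthogonal: "(\<integral>\<omega>. Y \<omega> * (S N \<omega> - S j \<omega>) \<partial>M) = 0" .
  have pointwise: "\<epsilon>\<^sup>2 * indicator A \<omega> + 2 * (Y \<omega> * (S N \<omega> - S j \<omega>))
      \<le> (S N \<omega> - S n \<omega>)\<^sup>2 * indicator A \<omega>" for \<omega>
  proof (cases "\<omega> \<in> A")
    case True
    then have "\<epsilon>\<^sup>2 \<le> \<bar>S j \<omega> - S n \<omega>\<bar>\<^sup>2"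
      using \<open>\<epsilon> > 0\<close> unfolding A_def first_exit_def by (intro power_mono) auto
    moreover have "(S N \<omega> - S n \<omega>)\<^sup>2 = (S j \<omega> - S n \<omega>)\<^sup>2
        + 2 * ((S j \<omega> - S n \<omega>) * (S N \<omega> - S j \<omega>)) + (S N \<omega> - S j \<omega>)\<^sup>2"
      by (simp add: power2_eq_square algebra_simps)
    ultimately show ?thesis using True unfolding Y_def by simp (meson add_increasing2 zero_le_power2)
  next
    case False
    then show ?thesis unfolding Y_def by simp
  qed
  have int_cross: "integrable M (\<lambda>\<omega>. Y \<omega> * (S N \<omega> - S j \<omega>))"
    using int_Yx j by (simp add: S_diff_eq_sum sum_distrib_left)
  have int_indicator: "integrable M (\<lambda>\<omega>. \<epsilon>\<^sup>2 * indicator A \<omega>)"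
    by (intro integrable_mult_right integrable_real_indicator) (auto simp: less_top[symmetric])
  have "\<epsilon>\<^sup>2 * measure M A = (\<integral>\<omega>. \<epsilon>\<^sup>2 * indicator A \<omega> + 2 * (Y \<omega> * (S N \<omega> - S j \<omega>)) \<partial>M)"
    using int_indicator int_cross orthogonal by simp
  also have "\<dots> \<le> (\<integral>\<omega>. (S N \<omega> - S n \<omega>)\<^sup>2 * indicator A \<omega> \<partial>M)"
    using int_indicator int_cross integrable_S_diff_square[of N n] pointwise
    by (intro integral_mono) (auto intro: integrable_real_mult_indicator)
  finally show ?thesis unfolding A_def .
qed

lemma kolmogorov_maximal_ineq:
  assumes "n \<le> N" and "\<epsilon> > 0"
  shows "\<epsilon>\<^sup>2 * measure M {\<omega>\<in>space M. \<exists>j\<in>{n..N}. \<epsilon> < \<bar>S j \<omega> - S n \<omega>\<bar>}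
           \<le> (\<Sum>k\<in>{n..<N}. (c k)\<^sup>2)"
proof -
  let ?A = "first_exit \<epsilon> n" and ?D = "\<lambda>\<omega>. (S N \<omega> - S n \<omega>)\<^sup>2"
  have [measurable]: "?A j \<in> sets M" if "j \<in> {n..N}" for j using that by (intro first_exit_sets) simp
  have disjoint: "disjoint_family_on ?A {n..N}"
    using first_exit_disjoint by (rule disjoint_family_on_mono[rotated]) auto
  have "\<epsilon>\<^sup>2 * measure M {\<omega>\<in>space M. \<exists>j\<in>{n..N}. \<epsilon> < \<bar>S j \<omega> - S n \<omega>\<bar>}
      \<le> \<epsilon>\<^sup>2 * measure M (\<Union>j\<in>{n..N}. ?A j)"
    using exceed_subset_first_exit by (intro mult_left_mono finite_measure_mono) auto
  also have "\<dots> = (\<Sum>j\<in>{n..N}. \<epsilon>\<^sup>2 * measure M (?A j))"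
    using disjoint by (subst measure_finite_Union) (auto simp: sum_distrib_left)
  also have "\<dots> \<le> (\<Sum>j\<in>{n..N}. (\<integral>\<omega>. ?D \<omega> * indicator (?A j) \<omega> \<partial>M))"
    using first_exit_measure_le \<open>\<epsilon> > 0\<close> by (intro sum_mono) auto
  also have "\<dots> = (\<integral>\<omega>. (\<Sum>j\<in>{n..N}. ?D \<omega> * indicator (?A j) \<omega>) \<partial>M)"
    using integrable_S_diff_square[of N n]
    by (intro Bochner_Integration.integral_sum[symmetric] integrable_real_mult_indicator) auto
  also have "\<dots> = (\<integral>\<omega>. ?D \<omega> * indicator (\<Union>j\<in>{n..N}. ?A j) \<omega> \<partial>M)"
    by (simp add: sum_distrib_left[symmetric] indicator_UN_disjoint[OF _ disjoint])
  also have "\<dots> \<le> (\<integral>\<omega>. ?D \<omega> \<partial>M)"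
    using integrable_S_diff_square[of N n]
    by (intro integral_mono integrable_real_mult_indicator) (auto simp: indicator_def)
  also have "\<dots> \<le> (\<Sum>k\<in>{n..<N}. (c k)\<^sup>2)" by (rule integral_S_diff_square_le[OF \<open>n \<le> N\<close>])
  finally show ?thesis .
qed

lemma measure_exceed_le:
  assumes summable: "summable (\<lambda>k. (c k)\<^sup>2)" and "\<epsilon> > 0"
  shows "measure M {\<omega>\<in>space M. \<exists>j\<ge>n. \<epsilon> < \<bar>S j \<omega> - S n \<omega>\<bar>} \<le> (\<Sum>k. (c (k + n))\<^sup>2) / \<epsilon>\<^sup>2"
proof -
  define E where "E N = {\<omega>\<in>space M. \<exists>j\<in>{n..N + n}. \<epsilon> < \<bar>S j \<omega> - S n \<omega>\<bar>}" for N
  have "E N \<in> sets M" for N unfolding E_def by measurable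
  then have E_sets: "range E \<subseteq> sets M" by blast
  have "incseq E"
  proof (rule incseq_SucI)
    fix N
    have "{n..N + n} \<subseteq> {n..Suc N + n}" by auto
    then show "E N \<subseteq> E (Suc N)" unfolding E_def by blast
  qed
  have "\<epsilon>\<^sup>2 * measure M (E N) \<le> (\<Sum>k. (c (k + n))\<^sup>2)" for N
  proof -
    have "(\<Sum>k\<in>{n..<N + n}. (c k)\<^sup>2) = (\<Sum>k<N. (c (k + n))\<^sup>2)"
      using sum.shift_bounds_nat_ivl[of "\<lambda>k. (c k)\<^sup>2" 0 n N] by (simp add: atLeast0LessThan)
    also have "\<dots> \<le> (\<Sum>k. (c (k + n))\<^sup>2)"
      using summable summable_iff_shift[of "\<lambda>k. (c k)\<^sup>2" n] by (intro sum_le_suminf) auto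
    finally show ?thesis
      using kolmogorov_maximal_ineq[of n "N + n" \<epsilon>] \<open>\<epsilon> > 0\<close> unfolding E_def by simp
  qed
  then have "measure M (E N) \<le> (\<Sum>k. (c (k + n))\<^sup>2) / \<epsilon>\<^sup>2" for N
    using \<open>\<epsilon> > 0\<close> by (simp add: pos_le_divide_eq mult.commute)
  moreover have "(\<lambda>N. measure M (E N)) \<longlonglongrightarrow> measure M (\<Union>N. E N)"
    by (rule finite_Lim_measure_incseq[OF E_sets \<open>incseq E\<close>])
  ultimately have "measure M (\<Union>N. E N) \<le> (\<Sum>k. (c (k + n))\<^sup>2) / \<epsilon>\<^sup>2"
    by (intro LIMSEQ_le_const2) auto
  moreover have "(\<Union>N. E N) = {\<omega>\<in>space M. \<exists>j\<ge>n. \<epsilon> < \<bar>S j \<omega> - S n \<omega>\<bar>}"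
  proof -
    have "(\<Union>N. {n..N + n}) = {n..}" by auto presburger
    then show ?thesis unfolding E_def by blast
  qed
  ultimately show ?thesis by simp
qed

lemma oscillation_eventually_le_AE:
  assumes summable: "summable (\<lambda>k. (c k)\<^sup>2)" and "\<epsilon> > 0"
  shows "AE \<omega> in M. \<exists>n. \<forall>j\<ge>n. \<bar>S j \<omega> - S n \<omega>\<bar> \<le> \<epsilon>"
proof -
  define Bad where "Bad = {\<omega>\<in>space M. \<forall>n. \<exists>j\<ge>n. \<epsilon> < \<bar>S j \<omega> - S n \<omega>\<bar>}"
  have [measurable]: "Bad \<in> sets M" unfolding Bad_def by measurable
  have "measure M Bad \<le> (\<Sum>k. (c (k + n))\<^sup>2) / \<epsilon>\<^sup>2" for n
  proof -
    have "Bad \<subseteq> {\<omega>\<in>space M. \<exists>j\<ge>n. \<epsilon> < \<bar>S j \<omega> - S n \<omega>\<bar>}" unfolding Bad_def by blast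
    then have "measure M Bad \<le> measure M {\<omega>\<in>space M. \<exists>j\<ge>n. \<epsilon> < \<bar>S j \<omega> - S n \<omega>\<bar>}"
      by (intro finite_measure_mono) measurable
    then show ?thesis using measure_exceed_le[OF summable \<open>\<epsilon> > 0\<close>, of n] by linarith
  qed
  moreover have "(\<lambda>n. (\<Sum>k. (c (k + n))\<^sup>2) / \<epsilon>\<^sup>2) \<longlonglongrightarrow> 0"
    by (intro tendsto_divide_zero suminf_exist_split2 summable)
  ultimately have "measure M Bad \<le> 0" by (intro LIMSEQ_le_const) auto
  then have "emeasure M Bad = 0" by (simp add: emeasure_eq_measure measure_le_0_iff)
  then show ?thesis by (intro AE_I[OF _ _ \<open>Bad \<in> sets M\<close>]) (auto simp: Bad_def not_le)
qed

lemma S_convergent_AE: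
  assumes "summable (\<lambda>k. (c k)\<^sup>2)"
  shows "AE \<omega> in M. convergent (\<lambda>n. S n \<omega>)"
proof -
  have "AE \<omega> in M. \<forall>r. \<exists>n. \<forall>j\<ge>n. \<bar>S j \<omega> - S n \<omega>\<bar> \<le> inverse (real (Suc r)) / 3"
    unfolding AE_all_countable by (intro allI oscillation_eventually_le_AE assms) simp
  then show ?thesis
  proof eventually_elim
    case (elim \<omega>)
    have "Cauchy (\<lambda>n. S n \<omega>)" unfolding Cauchy_iff2
    proof
      fix r
      obtain n where n: "\<And>j. j \<ge> n \<Longrightarrow> \<bar>S j \<omega> - S n \<omega>\<bar> \<le> inverse (real (Suc r)) / 3"
        using elim by blast
      have "\<bar>S j \<omega> - S j' \<omega>\<bar> < inverse (real (Suc r))" if "j \<ge> n" "j' \<ge> n" for j j'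
      proof -
        have "\<bar>S j \<omega> - S j' \<omega>\<bar> \<le> \<bar>S j \<omega> - S n \<omega>\<bar> + \<bar>S j' \<omega> - S n \<omega>\<bar>" by arith
        moreover have "0 < inverse (real (Suc r))" by simp
        ultimately show ?thesis using n[OF that(1)] n[OF that(2)] by linarith
      qed
      then show "\<exists>n. \<forall>j\<ge>n. \<forall>j'\<ge>n. \<bar>S j \<omega> - S j' \<omega>\<bar> < inverse (real (Suc r))" by blast
    qed
    then show ?case by (simp add: Cauchy_convergent_iff)
  qed
qed

end

section \<open>First-visit sampling\<close>

lemma not_summable_weighted_if_compensator_ge:
  fixes \<gamma> v q :: "nat \<Rightarrow> real"
  assumes \<gamma>: "\<And>k. 0 \<le> \<gamma> k" "\<not> summable \<gamma>"
    and v: "\<And>k. 0 \<le> v k" and q: "\<And>k. p \<le> q k" and "p > 0"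
    and compensated: "convergent (\<lambda>n. \<Sum>k<n. \<gamma> k * (v k - q k))"
  shows "\<not> summable (\<lambda>k. \<gamma> k * v k)"
proof
  assume summable: "summable (\<lambda>k. \<gamma> k * v k)"
  obtain B where B: "\<And>n. \<bar>\<Sum>k<n. \<gamma> k * (v k - q k)\<bar> \<le> B"
    using convergent_imp_Bseq[OF compensated] unfolding Bseq_def by auto
  have "p * (\<Sum>k<n. \<gamma> k) \<le> (\<Sum>k. \<gamma> k * v k) + B" for n
  proof -
    have "p * (\<Sum>k<n. \<gamma> k) \<le> (\<Sum>k<n. \<gamma> k * q k)"
      unfolding sum_distrib_left using \<gamma> q by (intro sum_mono) (metis mult.commute mult_left_mono)
    also have "\<dots> = (\<Sum>k<n. \<gamma> k * v k) - (\<Sum>k<n. \<gamma> k * (v k - q k))"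
      by (simp add: sum_subtractf[symmetric] algebra_simps)
    also have "\<dots> \<le> (\<Sum>k. \<gamma> k * v k) + B"
      using sum_le_suminf[OF summable, of "{..<n}"] \<gamma> v B[of n] by (auto simp: abs_le_iff)
    finally show ?thesis .
  qed
  then have "summable \<gamma>"
    using \<gamma>(1) \<open>p > 0\<close>
    by (intro summableI_nonneg_bounded[where x="((\<Sum>k. \<gamma> k * v k) + B) / p"])
       (simp_all add: pos_le_divide_eq mult.commute)
  with \<gamma>(2) show False by simp
qed

locale first_visit_sampling = prob_space M for M :: "'w measure" +
  fixes F :: "nat \<Rightarrow> 'w measure" and \<gamma> :: "nat \<Rightarrow> real" and p :: "'s \<Rightarrow> real" and C :: real
    and traj :: "nat \<Rightarrow> 'w \<Rightarrow> nat \<Rightarrow> 's" and L :: "nat \<Rightarrow> 'w \<Rightarrow> nat"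
    and D :: "nat \<Rightarrow> 'w \<Rightarrow> 's set" and w :: "nat \<Rightarrow> 's \<Rightarrow> 'w \<Rightarrow> real"
  assumes subalgebra: "\<And>k. subalgebra M (F k)"
    and filtration: "\<And>k. subalgebra (F (Suc k)) (F k)"
    and step: "\<And>k. 0 < \<gamma> k \<and> \<gamma> k \<le> 1"
    and step_not_summable: "\<not> summable \<gamma>"
    and step_square_summable: "summable (\<lambda>k. (\<gamma> k)\<^sup>2)"
    and p_pos: "\<And>i. p i > 0"
    and traj_measurable: "\<And>k n. (\<lambda>\<omega>. traj k \<omega> n) \<in> measurable (F (Suc k)) (count_space UNIV)"
    and L_measurable: "\<And>k. L k \<in> measurable (F (Suc k)) (count_space UNIV)"
    and w_measurable: "\<And>k i. w k i \<in> borel_measurable (F (Suc k))"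
    and initial_law: "\<And>k i. AE \<omega> in M.
          real_cond_exp M (F k) (indicator {\<omega>. traj k \<omega> 0 = i}) \<omega> = p i"
    and D_eq: "\<And>k \<omega>. D k \<omega> = traj k \<omega> ` {..L k \<omega>}"
    and noise_mean: "\<And>k i. AE \<omega> in M.
          real_cond_exp M (F k) (\<lambda>\<omega>. indicator {\<omega>. i \<in> D k \<omega>} \<omega> * w k i \<omega>) \<omega> = 0"
    and noise_bounded: "\<And>k i. AE \<omega> in M. i \<in> D k \<omega> \<longrightarrow> \<bar>w k i \<omega>\<bar> \<le> C"
begin

definition visit :: "nat \<Rightarrow> 's \<Rightarrow> 'w \<Rightarrow> real" where
  "visit k i \<omega> = indicator {\<omega>. i \<in> D k \<omega>} \<omega>"

lemma sigma_finite_F: "sigma_finite_subalgebra M (F k)"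
  by (rule finite_measure_subalgebra_is_sigma_finite)
     (simp add: finite_measure_subalgebra_def finite_measure_subalgebra_axioms_def
       finite_measure_axioms subalgebra)

lemma measurable_F_M: "f \<in> borel_measurable (F k) \<Longrightarrow> f \<in> borel_measurable M"
  using measurable_from_subalg[OF subalgebra] by blast

lemma visit_measurable_F: "visit k i \<in> borel_measurable (F (Suc k))"
proof -
  have [measurable]: "L k \<in> measurable (F (Suc k)) (count_space UNIV)"
    "(\<lambda>\<omega>. traj k \<omega> j) \<in> measurable (F (Suc k)) (count_space UNIV)" for j
    by (rule L_measurable traj_measurable)+
  have "visit k i = (\<lambda>\<omega>. if \<exists>j\<le>L k \<omega>. traj k \<omega> j = i then 1 else 0)"
    unfolding visit_def by (auto simp: D_eq indicator_def fun_eq_iff)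
  also have "\<dots> \<in> borel_measurable (F (Suc k))" by measurable
  finally show ?thesis .
qed

lemma visit_measurable [measurable]: "visit k i \<in> borel_measurable M"
  using measurable_F_M[OF visit_measurable_F] .

lemma visit_01: "visit k i \<omega> \<in> {0, 1}"
  by (simp add: visit_def indicator_def)

lemma integrable_visit: "integrable M (visit k i)"
  by (rule integrable_const_bound[where B=1]) (auto simp: visit_def indicator_def)

lemma noise_series_convergent_AE:
  "AE \<omega> in M. convergent (\<lambda>n. \<Sum>k<n. \<gamma> k * (visit k i \<omega> * w k i \<omega>))"
proof -
  interpret martingale_difference_seq M F "\<lambda>k \<omega>. \<gamma> k * (visit k i \<omega> * w k i \<omega>)" "\<lambda>k. \<gamma> k * \<bar>C\<bar>"
  proof (unfold_locales; (rule subalgebra filtration)?)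
    fix k
    have [measurable]: "w k i \<in> borel_measurable (F (Suc k))" "visit k i \<in> borel_measurable (F (Suc k))"
      by (rule w_measurable visit_measurable_F)+
    show "(\<lambda>\<omega>. \<gamma> k * (visit k i \<omega> * w k i \<omega>)) \<in> borel_measurable (F (Suc k))" by measurable
    have bounded: "AE \<omega> in M. \<bar>visit k i \<omega> * w k i \<omega>\<bar> \<le> \<bar>C\<bar>"
      using noise_bounded[where k=k and i=i] by eventually_elim (auto simp: visit_def indicator_def)
    then show "AE \<omega> in M. \<bar>\<gamma> k * (visit k i \<omega> * w k i \<omega>)\<bar> \<le> \<gamma> k * \<bar>C\<bar>"
      by eventually_elim (use step[of k] in \<open>simp add: abs_mult mult_left_mono\<close>)
    have int: "integrable M (\<lambda>\<omega>. visit k i \<omega> * w k i \<omega>)"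
      using bounded measurable_F_M[OF w_measurable]
      by (intro integrable_const_bound[where B="\<bar>C\<bar>"]) auto
    interpret F: sigma_finite_subalgebra M "F k" by (rule sigma_finite_F)
    from F.real_cond_exp_cmult[OF int, of "\<gamma> k"]
    show "AE \<omega> in M. real_cond_exp M (F k) (\<lambda>\<omega>. \<gamma> k * (visit k i \<omega> * w k i \<omega>)) \<omega> = 0"
      using noise_mean[of k i] by eventually_elim (simp add: visit_def)
  qed
  have "summable (\<lambda>k. (\<gamma> k * \<bar>C\<bar>)\<^sup>2)"
    using summable_mult2[OF step_square_summable, of "C\<^sup>2"] by (simp add: power_mult_distrib)
  then show ?thesis using S_convergent_AE unfolding S_def by simp
qed

lemma visit_cond_prob_ge: "AE \<omega> in M. p i \<le> real_cond_exp M (F k) (visit k i) \<omega>"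
proof -
  interpret F: sigma_finite_subalgebra M "F k" by (rule sigma_finite_F)
  have [measurable]: "(\<lambda>\<omega>. traj k \<omega> 0) \<in> measurable M (count_space UNIV)"
    using measurable_from_subalg[OF subalgebra traj_measurable] .
  let ?start = "indicator {\<omega>. traj k \<omega> 0 = i} :: 'w \<Rightarrow> real"
  have "?start = (\<lambda>\<omega>. if traj k \<omega> 0 = i then 1 else 0)" by (auto simp: indicator_def)
  also have "\<dots> \<in> borel_measurable M" by measurable
  finally have "integrable M ?start"
    by (intro integrable_const_bound[where B=1]) (auto simp: indicator_def)
  moreover have "?start \<omega> \<le> visit k i \<omega>" for \<omega>
    using visit_01[of k i \<omega>] unfolding visit_def D_eq by (auto simp: indicator_def)
  ultimately have "AE \<omega> in M. real_cond_exp M (F k) ?start \<omega> \<le> real_cond_exp M (F k) (visit k i) \<omega>"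
    by (intro F.real_cond_exp_mono integrable_visit) auto
  then show ?thesis using initial_law[of k i] by eventually_elim simp
qed

lemma visit_compensated_convergent_AE:
  "AE \<omega> in M. convergent
     (\<lambda>n. \<Sum>k<n. \<gamma> k * (visit k i \<omega> - real_cond_exp M (F k) (visit k i) \<omega>))"
proof -
  interpret martingale_difference_seq M F
    "\<lambda>k \<omega>. \<gamma> k * (visit k i \<omega> - real_cond_exp M (F k) (visit k i) \<omega>)" \<gamma>
  proof (unfold_locales; (rule subalgebra filtration)?)
    fix k
    interpret F: sigma_finite_subalgebra M "F k" by (rule sigma_finite_F)
    let ?q = "real_cond_exp M (F k) (visit k i)"
    have [measurable]: "visit k i \<in> borel_measurable (F (Suc k))" "?q \<in> borel_measurable (F (Suc k))"
      using visit_measurable_F measurable_from_subalg[OF filtration borel_measurable_cond_exp]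
      by auto
    show "(\<lambda>\<omega>. \<gamma> k * (visit k i \<omega> - ?q \<omega>)) \<in> borel_measurable (F (Suc k))" by measurable
    have "AE \<omega> in M. 0 \<le> ?q \<omega>"
      by (rule F.real_cond_exp_pos) (auto simp: visit_def)
    moreover have "AE \<omega> in M. ?q \<omega> \<le> 1"
      by (rule F.real_cond_exp_le_c[OF integrable_visit]) (auto simp: visit_def)
    ultimately show "AE \<omega> in M. \<bar>\<gamma> k * (visit k i \<omega> - ?q \<omega>)\<bar> \<le> \<gamma> k"
    proof eventually_elim
      case (elim \<omega>)
      then have "\<bar>visit k i \<omega> - ?q \<omega>\<bar> \<le> 1" using visit_01[of k i \<omega>] by auto
      then show ?case using step[of k] by (simp add: abs_mult mult_left_le)
    qed
    have int_q: "integrable M ?q" by (rule F.real_cond_exp_int(1)[OF integrable_visit])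
    have int_diff: "integrable M (\<lambda>\<omega>. visit k i \<omega> - ?q \<omega>)" using integrable_visit int_q by auto
    have "AE \<omega> in M. real_cond_exp M (F k) ?q \<omega> = ?q \<omega>"
      by (rule F.real_cond_exp_F_meas[OF int_q]) simp
    then show "AE \<omega> in M. real_cond_exp M (F k) (\<lambda>\<omega>. \<gamma> k * (visit k i \<omega> - ?q \<omega>)) \<omega> = 0"
      using F.real_cond_exp_cmult[OF int_diff, of "\<gamma> k"]
        F.real_cond_exp_diff[OF integrable_visit[of k i] int_q]
      by eventually_elim simp
  qed
  show ?thesis using S_convergent_AE[OF step_square_summable] unfolding S_def by simp
qed

lemma visits_not_summable_AE: "AE \<omega> in M. \<not> summable (\<lambda>k. \<gamma> k * visit k i \<omega>)"
proof -
  have "AE \<omega> in M. \<forall>k. p i \<le> real_cond_exp M (F k) (visit k i) \<omega>"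
    using visit_cond_prob_ge by (simp add: AE_all_countable)
  then show ?thesis using visit_compensated_convergent_AE[of i]
  proof eventually_elim
    case (elim \<omega>)
    show ?case
      using step step_not_summable p_pos elim
      by (intro not_summable_weighted_if_compensator_ge[where q="\<lambda>k. real_cond_exp M (F k) (visit k i) \<omega>"])
         (auto simp: less_imp_le visit_def)
  qed
qed

end

theorem theorem1:
  fixes P :: "'s::finite \<Rightarrow> 'a::finite \<Rightarrow> 's \<Rightarrow> real"
    and g :: "'s \<Rightarrow> 'a \<Rightarrow> real" and \<alpha> :: real
    and m H :: nat and V0 :: "'s \<Rightarrow> real" and \<gamma> :: "nat \<Rightarrow> real"
    and p :: "'s \<Rightarrow> real" and C :: real
    and M :: "'w measure" and F :: "nat \<Rightarrow> 'w measure"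
    and V :: "nat \<Rightarrow> 'w \<Rightarrow> 's \<Rightarrow> real"
    and \<mu> :: "nat \<Rightarrow> 'w \<Rightarrow> 's \<Rightarrow> 'a"
    and traj :: "nat \<Rightarrow> 'w \<Rightarrow> nat \<Rightarrow> 's"
    and L :: "nat \<Rightarrow> 'w \<Rightarrow> nat"
    and D :: "nat \<Rightarrow> 'w \<Rightarrow> 's set"
    and w :: "nat \<Rightarrow> 's \<Rightarrow> 'w \<Rightarrow> real"
  assumes mdp: "mdp P g \<alpha>"
    and m: "m \<ge> 1" and H: "H \<ge> 1"
    and step: "\<And>k. 0 < \<gamma> k \<and> \<gamma> k \<le> 1"
    and p_distr: "\<And>i. p i > 0" "(\<Sum>i\<in>UNIV. p i) = 1"
    and cond_b: "\<alpha> ^ (H - 1) + 2 * (1 + \<alpha> ^ m) * (\<alpha> ^ (H - 1) / (1 - \<alpha>)) < 1"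
    and step_div: "\<not> summable \<gamma>"
    and step_sq: "summable (\<lambda>k. (\<gamma> k)\<^sup>2)"
    and prob: "prob_space M"
    and filt_sub: "\<And>k. subalgebra M (F k)"
    and filt_mono: "\<And>k. subalgebra (F (Suc k)) (F k)"
    and V_init: "\<And>\<omega>. V 0 \<omega> = V0"
    and greedy: "\<And>k \<omega>. Tmu P g \<alpha> (\<mu> (Suc k) \<omega>) ((Tbell P g \<alpha> ^^ (H - 1)) (V k \<omega>))
                       = (Tbell P g \<alpha> ^^ H) (V k \<omega>)"
    and \<mu>_meas: "\<And>k. \<mu> (Suc k) \<in> measurable (F k) (count_space UNIV)"
    and traj_meas: "\<And>k n. (\<lambda>\<omega>. traj k \<omega> n) \<in> measurable (F (Suc k)) (count_space UNIV)"
    and L_meas: "\<And>k. L k \<in> measurable (F (Suc k)) (count_space UNIV)"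
    and w_meas: "\<And>k i. w k i \<in> borel_measurable (F (Suc k))"
    and traj_law: "\<And>k n (xs :: nat \<Rightarrow> 's). AE \<omega> in M.
         real_cond_exp M (F k) (indicator {\<omega>. \<forall>j\<le>n. traj k \<omega> j = xs j}) \<omega>
           = p (xs 0) * (\<Prod>j<n. P (xs j) (\<mu> (Suc k) \<omega> (xs j)) (xs (Suc j)))"
    and D_def: "\<And>k \<omega>. D k \<omega> = traj k \<omega> ` {..L k \<omega>}"
    and update: "\<And>k \<omega> i. V (Suc k) \<omega> i =
         (if i \<in> D k \<omega>
          then (1 - \<gamma> k) * V k \<omega> i
               + \<gamma> k * ((Tmu P g \<alpha> (\<mu> (Suc k) \<omega>) ^^ m) ((Tbell P g \<alpha> ^^ (H - 1)) (V k \<omega>)) i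
                         + w k i \<omega>)
          else V k \<omega> i)"
    and noise_mean: "\<And>k i. AE \<omega> in M.
         real_cond_exp M (F k) (\<lambda>\<omega>. indicator {\<omega>. i \<in> D k \<omega>} \<omega> * w k i \<omega>) \<omega> = 0"
    and noise_bound: "\<And>k i. AE \<omega> in M. i \<in> D k \<omega> \<longrightarrow> \<bar>w k i \<omega>\<bar> \<le> C"
  shows "AE \<omega> in M. \<forall>i. (\<lambda>k. V k \<omega> i) \<longlonglongrightarrow> Jstar P g \<alpha> i"
proof -
  interpret first_visit_sampling M F \<gamma> p C traj L D w
  proof (intro first_visit_sampling.intro[OF prob] first_visit_sampling_axioms.intro;
      (rule filt_sub filt_mono step step_div step_sq p_distr(1) traj_meas L_meas w_meas D_def
        noise_mean noise_bound)?)
    show "AE \<omega> in M. real_cond_exp M (F k) (indicator {\<omega>. traj k \<omega> 0 = i}) \<omega> = p i" for k i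
      using traj_law[where k=k and n=0 and xs="\<lambda>_. i"] by simp
  qed
  have \<alpha>: "0 < \<alpha>" "\<alpha> < 1" using mdp by (auto simp: mdp_def)
  have "AE \<omega> in M. \<forall>i. \<not> summable (\<lambda>k. \<gamma> k * visit k i \<omega>)
      \<and> convergent (\<lambda>n. \<Sum>k<n. \<gamma> k * (visit k i \<omega> * w k i \<omega>))
      \<and> (\<forall>k. i \<in> D k \<omega> \<longrightarrow> \<bar>w k i \<omega>\<bar> \<le> C)"
    using visits_not_summable_AE noise_series_convergent_AE noise_bound
    by (simp add: AE_all_countable AE_conj_iff)
  then show ?thesis
  proof eventually_elim
    case (elim \<omega>)
    have visit: "visit k i \<omega> = indicator (D k \<omega>) i" for k i by (simp add: visit_def indicator_def)
    show ?case
    proof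
      fix i
      show "(\<lambda>k. V k \<omega> i) \<longlonglongrightarrow> Jstar P g \<alpha> i"
        using step elim
        by (intro lookahead_iteration_tendsto_Jstar[OF mdp m H lookahead_factor_lt_1[OF \<alpha> H cond_b] _
              greedy[where \<omega>=\<omega>], where D="\<lambda>k. D k \<omega>" and w="\<lambda>k i. w k i \<omega>" and C=C])
           (auto simp: update visit mult.assoc less_imp_le)
    qed
  qed
qed

end
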